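(* Let $(X,d)$ be a compact metric space and $f\colon X\to X$ a continuous map that is c-expansive or equicontinuous. If $f$ has the shadowing property, then $f$ has the limit shadowing property.
   Context: For a continuous surjection $f$, let $X_f=\{(x_i)_{i\in\mathbb{Z}}\in X^{\mathbb{Z}}: f(x_i)=x_{i+1}\ \forall i\}$; $f$ is c-expansive if there is $e>0$ such that for $(x_i),(y_i)\in X_f$, $d(x_i,y_i)\le e$ for all $i\in\mathbb{Z}$ implies $(x_i)=(y_i)$. $f$ is equicontinuous if for every $\epsilon>0$ there is $\delta>0$ such that $d(x,y)\le\delta$ implies $\sup_{n\ge0}d(f^n(x),f^n(y))\le\epsilon$. Shadowing property: for every $\epsilon>0$ there is $\delta>0$ such that every sequence $(x_i)_{i\ge0}$ with $d(f(x_i),x_{i+1})\le\delta$ for all $i$ admits $x\in X$ with $d(x_i,f^i(x))\le\epsilon$ for all $i$. Limit shadowing property: every sequence $(x_i)_{i\ge0}$ with $\lim_i d(f(x_i),x_{i+1})=0$ admits $y\in X$ with $\lim_i d(x_i,f^i(y))=0$. *)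

theory Defs
  imports "HOL-Analysis.Analysis"
begin

definition orbit_space :: "('a \<Rightarrow> 'a) \<Rightarrow> (int \<Rightarrow> 'a) set" where
  "orbit_space f = {x. \<forall>i. f (x i) = x (i + 1)}"

definition c_expansive :: "('a::metric_space \<Rightarrow> 'a) \<Rightarrow> bool" where
  "c_expansive f \<longleftrightarrow> (\<exists>e>0. \<forall>x\<in>orbit_space f. \<forall>y\<in>orbit_space f.
      (\<forall>i. dist (x i) (y i) \<le> e) \<longrightarrow> x = y)"

definition equicontinuous_map :: "('a::metric_space \<Rightarrow> 'a) \<Rightarrow> bool" where
  "equicontinuous_map f \<longleftrightarrow> (\<forall>\<epsilon>>0. \<exists>\<delta>>0. \<forall>x y. dist x y \<le> \<delta> \<longrightarrow>
      (SUP n. dist ((f ^^ n) x) ((f ^^ n) y)) \<le> \<epsilon>)"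

definition shadowing :: "('a::metric_space \<Rightarrow> 'a) \<Rightarrow> bool" where
  "shadowing f \<longleftrightarrow> (\<forall>\<epsilon>>0. \<exists>\<delta>>0. \<forall>xs :: nat \<Rightarrow> 'a.
      (\<forall>i. dist (f (xs i)) (xs (Suc i)) \<le> \<delta>) \<longrightarrow>
      (\<exists>x. \<forall>i. dist (xs i) ((f ^^ i) x) \<le> \<epsilon>))"

definition limit_shadowing :: "('a::metric_space \<Rightarrow> 'a) \<Rightarrow> bool" where
  "limit_shadowing f \<longleftrightarrow> (\<forall>xs :: nat \<Rightarrow> 'a.
      (\<lambda>i. dist (f (xs i)) (xs (Suc i))) \<longlonglongrightarrow> 0 \<longrightarrow>
      (\<exists>y. (\<lambda>i. dist (xs i) ((f ^^ i) y)) \<longlonglongrightarrow> 0))"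

end

theory Submission
  imports Defs
begin

text \<open>For every \<open>\<delta> > 0\<close>, an asymptotic pseudo orbit is from some time on a \<open>\<delta>\<close>-pseudo orbit.
  Since \<open>f\<close> need not be surjective, its tail cannot simply be shadowed and pulled back; instead,
  by compactness some image \<open>f\<^sup>n(X)\<close> lies uniformly close to every image \<open>f\<^sup>m(X)\<close>, and a late point
  of the pseudo orbit lies close to \<open>f\<^sup>n(X)\<close>, so an exact orbit segment can be prepended. Shadowing
  then yields, for every \<open>\<epsilon>\<close>, a point whose orbit eventually \<open>\<epsilon>\<close>-traces the pseudo orbit.
  Under c-expansivity with constant \<open>e\<close>, the orbits of two such points for \<open>\<epsilon> \<le> e/2\<close> stay
  eventually \<open>e\<close>-close and are therefore asymptotic, so a single point traces at every scale. Under
  equicontinuity, a limit point of tracing points at scales \<open>1/k\<close> traces at every scale.\<close>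

lemma compact_UNIV_fun:
  assumes "compact (UNIV :: 'b::topological_space set)"
  shows "compact (UNIV :: ('i \<Rightarrow> 'b) set)"
proof -
  have "compact_space (euclidean :: 'b topology)"
    using assms by (simp add: compact_space_def)
  then have "compact_space (product_topology (\<lambda>i::'i. euclidean::'b topology) UNIV)"
    by (simp add: compact_space_product_topology)
  then show ?thesis
    by (simp add: euclidean_product_topology compact_space_def)
qed

lemma continuous_on_funpow:
  fixes f :: "'a::topological_space \<Rightarrow> 'a"
  assumes "continuous_on UNIV f"
  shows "continuous_on UNIV (f ^^ n)"
proof (induction n)
  case (Suc n)
  have "continuous_on UNIV (f \<circ> (f ^^ n))"
    using Suc.IH continuous_on_subset[OF assms] by (rule continuous_on_compose) simp
  then show ?case by simp
qed simp

lemma closed_range_funpow: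
  assumes "compact (UNIV :: 'a::t2_space set)" and "continuous_on UNIV f"
  shows "closed (range (f ^^ n :: 'a \<Rightarrow> 'a))"
  by (intro compact_imp_closed compact_continuous_image continuous_on_funpow assms)

lemma range_funpow_antimono:
  fixes f :: "'a \<Rightarrow> 'a"
  assumes "m \<le> n"
  shows "range (f ^^ n) \<subseteq> range (f ^^ m)"
proof -
  have "f ^^ n = (f ^^ m) \<circ> (f ^^ (n - m))"
    using assms by (simp flip: funpow_add)
  then show ?thesis by auto
qed

lemma uniformly_near_range_funpow:
  fixes f :: "'a::metric_space \<Rightarrow> 'a"
  assumes cpt: "compact (UNIV :: 'a set)" and cont: "continuous_on UNIV f" and "d > 0"
  shows "\<exists>n. \<forall>m x. \<exists>p. dist ((f ^^ n) x) ((f ^^ m) p) < d"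
proof (rule ccontr)
  assume "\<not> ?thesis"
  then obtain X M where far: "\<And>n p. dist ((f ^^ n) (X n)) ((f ^^ M n) p) \<ge> d"
    by (metis not_less)
  define P where "P n = (f ^^ n) (X n)" for n
  obtain q s where s: "strict_mono s" and lim: "(P \<circ> s) \<longlonglongrightarrow> q"
    by (rule seq_compactE[OF compact_imp_seq_compact[OF cpt], of P]) auto
  have "q \<in> range (f ^^ m)" for m
  proof (rule closed_sequentially[OF closed_range_funpow[OF cpt cont]])
    show "(P \<circ> s) (k + m) \<in> range (f ^^ m)" for k
      using range_funpow_antimono seq_suble[OF s] unfolding P_def o_def
      by (metis add_leD2 rangeI subsetD)
    show "(\<lambda>k. (P \<circ> s) (k + m)) \<longlonglongrightarrow> q"
      using LIMSEQ_ignore_initial_segment[OF lim] .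
  qed
  then have "\<exists>p. q = (f ^^ M (s k)) p" for k
    by blast
  moreover obtain k where "dist ((P \<circ> s) k) q < d"
    using lim \<open>d > 0\<close> unfolding tendsto_iff by (metis eventually_sequentially order.refl)
  ultimately show False
    using far unfolding P_def o_def by (metis not_less)
qed

lemma asymptotic_pseudo_orbit_near_range_funpow:
  fixes f :: "'a::metric_space \<Rightarrow> 'a"
  assumes uc: "uniformly_continuous_on UNIV f"
    and xs: "(\<lambda>i. dist (f (xs i)) (xs (Suc i))) \<longlonglongrightarrow> 0"
    and "g > 0"
  shows "\<forall>\<^sub>F i in sequentially. \<exists>a. dist (xs i) ((f ^^ n) a) < g"
  using \<open>g > 0\<close>
proof (induction n arbitrary: g)
  case 0
  have "\<exists>a. dist (xs i) ((f ^^ 0) a) < g" for i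
    using "0" by (intro exI[of _ "xs i"]) simp
  then show ?case
    by (simp add: always_eventually)
next
  case (Suc n)
  obtain dd where "dd > 0" and dd: "\<And>x x'. dist x' x < dd \<Longrightarrow> dist (f x') (f x) < g/2"
    using uc Suc.prems unfolding uniformly_continuous_on_def by (metis half_gt_zero UNIV_I)
  have "\<forall>\<^sub>F i in sequentially. dist (f (xs i)) (xs (Suc i)) < g/2"
    using xs Suc.prems unfolding tendsto_iff by (simp del: less_divide_eq_numeral1)
  with Suc.IH[OF \<open>dd > 0\<close>]
  have "\<forall>\<^sub>F i in sequentially. \<exists>a. dist (xs (Suc i)) ((f ^^ Suc n) a) < g"
  proof eventually_elim
    case (elim i)
    then obtain a where "dist (xs i) ((f ^^ n) a) < dd"
      by blast
    then have "dist (f (xs i)) ((f ^^ Suc n) a) < g/2"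
      using dd by simp
    then have "dist (xs (Suc i)) ((f ^^ Suc n) a) < g"
      using elim dist_triangle[of "xs (Suc i)" "(f ^^ Suc n) a" "f (xs i)"]
      by (simp add: dist_commute)
    then show ?case by blast
  qed
  then show ?case
    using eventually_sequentially_Suc[of "\<lambda>i. \<exists>a. dist (xs i) ((f ^^ Suc n) a) < g"] by blast
qed

lemma shadowing_eventually_traces:
  fixes f :: "'a::metric_space \<Rightarrow> 'a"
  assumes cpt: "compact (UNIV :: 'a set)" and cont: "continuous_on UNIV f"
    and "shadowing f"
    and xs: "(\<lambda>i. dist (f (xs i)) (xs (Suc i))) \<longlonglongrightarrow> 0"
    and "\<epsilon> > 0"
  shows "\<exists>y. \<forall>\<^sub>F i in sequentially. dist (xs i) ((f ^^ i) y) \<le> \<epsilon>"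
proof -
  obtain \<delta> where "\<delta> > 0" and shadow: "\<And>zs. \<forall>i. dist (f (zs i)) (zs (Suc i)) \<le> \<delta> \<Longrightarrow>
      \<exists>y. \<forall>i. dist (zs i) ((f ^^ i) y) \<le> \<epsilon>"
    using \<open>shadowing f\<close> \<open>\<epsilon> > 0\<close> unfolding shadowing_def by blast
  obtain n where n: "\<And>m x. \<exists>p. dist ((f ^^ n) x) ((f ^^ m) p) < \<delta>/2"
    using uniformly_near_range_funpow[OF cpt cont, of "\<delta>/2"] \<open>\<delta> > 0\<close> by auto
  have "uniformly_continuous_on UNIV f"
    using compact_uniformly_continuous cont cpt by blast
  from asymptotic_pseudo_orbit_near_range_funpow[OF this xs, of "\<delta>/2" n]
  have "\<forall>\<^sub>F i in sequentially. (\<exists>a. dist (xs i) ((f ^^ n) a) < \<delta>/2)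
      \<and> dist (f (xs i)) (xs (Suc i)) < \<delta>"
    using xs \<open>\<delta> > 0\<close> unfolding tendsto_iff by (auto elim: eventually_conj)
  then obtain N where N: "\<And>i. i \<ge> N \<Longrightarrow> (\<exists>a. dist (xs i) ((f ^^ n) a) < \<delta>/2)
      \<and> dist (f (xs i)) (xs (Suc i)) < \<delta>"
    unfolding eventually_sequentially by blast
  obtain a where a: "dist (xs N) ((f ^^ n) a) < \<delta>/2"
    using N by blast
  obtain p where p: "dist ((f ^^ n) a) ((f ^^ N) p) < \<delta>/2"
    using n by blast
  \<comment> \<open>An exact orbit segment ending \<open>\<delta>\<close>-close to \<open>xs N\<close>, followed by the tail of \<open>xs\<close>,
      is a \<open>\<delta>\<close>-pseudo orbit; this is where the uniform approximation by all images is needed.\<close>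
  define zs where "zs j = (if j < N then (f ^^ j) p else xs j)" for j
  have "dist (f (zs j)) (zs (Suc j)) \<le> \<delta>" for j
  proof -
    consider "Suc j < N" | "Suc j = N" | "j \<ge> N" by linarith
    then show ?thesis
    proof cases
      case 1
      then show ?thesis using \<open>\<delta> > 0\<close> by (simp add: zs_def)
    next
      case 2
      then have "f (zs j) = (f ^^ N) p" and "zs (Suc j) = xs N"
        by (auto simp: zs_def)
      then show ?thesis
        using a p dist_triangle[of "(f ^^ N) p" "xs N" "(f ^^ n) a"] by (simp add: dist_commute)
    next
      case 3
      then show ?thesis using N[of j] by (simp add: zs_def)
    qed
  qed
  then obtain y where "\<And>i. dist (zs i) ((f ^^ i) y) \<le> \<epsilon>"
    using shadow by blast
  then have "\<forall>i\<ge>N. dist (xs i) ((f ^^ i) y) \<le> \<epsilon>"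
    by (metis zs_def not_le)
  then show ?thesis
    unfolding eventually_sequentially by blast
qed

lemma orbit_space_limit:
  fixes f :: "'a::t2_space \<Rightarrow> 'a" and T :: "nat \<Rightarrow> int"
  assumes cont: "continuous_on UNIV f"
    and lim: "\<And>j. (\<lambda>k. (f ^^ nat (T k + j)) c) \<longlonglongrightarrow> w j"
    and nonneg: "\<And>j. \<forall>\<^sub>F k in sequentially. T k + j \<ge> 0"
  shows "w \<in> orbit_space f"
  unfolding orbit_space_def
proof (intro CollectI allI)
  fix j
  have "(\<lambda>k. f ((f ^^ nat (T k + j)) c)) \<longlonglongrightarrow> f (w j)"
    using continuous_on_tendsto_compose[OF cont lim] by simp
  moreover have "\<forall>\<^sub>F k in sequentially. f ((f ^^ nat (T k + j)) c) = (f ^^ nat (T k + (j + 1))) c"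
    using nonneg[of j]
  proof eventually_elim
    case (elim k)
    then have "nat (T k + (j + 1)) = Suc (nat (T k + j))" by linarith
    then show ?case by simp
  qed
  ultimately have "(\<lambda>k. (f ^^ nat (T k + (j + 1))) c) \<longlonglongrightarrow> f (w j)"
    by (rule Lim_transform_eventually)
  with lim[of "j + 1"] show "f (w j) = w (j + 1)"
    using LIMSEQ_unique by blast
qed

lemma c_expansive_forward_asymptotic:
  fixes f :: "'a::metric_space \<Rightarrow> 'a"
  assumes cpt: "compact (UNIV :: 'a set)" and cont: "continuous_on UNIV f"
    and exp: "\<forall>x\<in>orbit_space f. \<forall>y\<in>orbit_space f. (\<forall>i. dist (x i) (y i) \<le> e) \<longrightarrow> x = y"
    and close: "\<forall>\<^sub>F n in sequentially. dist ((f ^^ n) a) ((f ^^ n) b) \<le> e"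
  shows "(\<lambda>n. dist ((f ^^ n) a) ((f ^^ n) b)) \<longlonglongrightarrow> 0"
proof (rule ccontr)
  define D where "D n = dist ((f ^^ n) a) ((f ^^ n) b)" for n
  assume "\<not> (\<lambda>n. dist ((f ^^ n) a) ((f ^^ n) b)) \<longlonglongrightarrow> 0"
  then obtain \<gamma> where "\<gamma> > 0" and "\<exists>\<^sub>F n in sequentially. D n \<ge> \<gamma>"
    unfolding tendsto_iff D_def by (auto simp: not_eventually not_less)
  then obtain r where r_ge: "\<And>N. r N \<ge> N" and far: "\<And>N. D (r N) \<ge> \<gamma>"
    unfolding frequently_sequentially by metis
  \<comment> \<open>Limits of the two-sided windows around the times \<open>r N\<close>, taken in the compact space
      of pairs of bi-infinite sequences, are two orbits that stay \<open>e\<close>-close but differ at time 0.\<close>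
  define U where "U N j = ((f ^^ nat (int (r N) + j)) a, (f ^^ nat (int (r N) + j)) b)" for N j
  have "compact (UNIV :: (int \<Rightarrow> 'a \<times> 'a) set)"
    using compact_UNIV_fun compact_Times[OF cpt cpt] by simp
  then obtain l s where s: "strict_mono s" and lim: "(U \<circ> s) \<longlonglongrightarrow> l"
    by (rule seq_compactE[OF compact_imp_seq_compact, of _ U]) auto
  define T where "T k = int (r (s k))" for k
  have late: "\<forall>\<^sub>F k in sequentially. T k + j \<ge> int M" for j M
    unfolding eventually_sequentially
  proof (intro exI[of _ "nat (int M - j)"] allI impI)
    fix k assume "nat (int M - j) \<le> k"
    moreover have "k \<le> r (s k)"
      using seq_suble[OF s, of k] r_ge[of "s k"] by linarith
    ultimately show "T k + j \<ge> int M"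
      unfolding T_def by linarith
  qed
  have limj: "(\<lambda>k. ((f ^^ nat (T k + j)) a, (f ^^ nat (T k + j)) b)) \<longlonglongrightarrow> l j" for j
    using continuous_on_tendsto_compose[OF continuous_on_product_coordinates lim]
    by (simp add: U_def T_def o_def)
  have limu: "(\<lambda>k. (f ^^ nat (T k + j)) a) \<longlonglongrightarrow> fst (l j)" for j
    using tendsto_fst[OF limj] by simp
  have limv: "(\<lambda>k. (f ^^ nat (T k + j)) b) \<longlonglongrightarrow> snd (l j)" for j
    using tendsto_snd[OF limj] by simp
  have nonneg: "\<forall>\<^sub>F k in sequentially. T k + j \<ge> 0" for j
    using late[where M = 0] by simp
  have orbits: "(\<lambda>j. fst (l j)) \<in> orbit_space f" "(\<lambda>j. snd (l j)) \<in> orbit_space f"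
    using orbit_space_limit[OF cont limu nonneg] orbit_space_limit[OF cont limv nonneg] .
  have close_limits: "dist (fst (l j)) (snd (l j)) \<le> e" for j
  proof (rule tendsto_upperbound[OF tendsto_dist[OF limu limv]])
    obtain M where "\<forall>n\<ge>M. D n \<le> e"
      using close unfolding eventually_sequentially D_def by blast
    then show "\<forall>\<^sub>F k in sequentially. dist ((f ^^ nat (T k + j)) a) ((f ^^ nat (T k + j)) b) \<le> e"
      using late[where j = j and M = M] unfolding D_def by (auto elim: eventually_mono)
  qed simp
  have "(\<lambda>j. fst (l j)) = (\<lambda>j. snd (l j))"
    using exp orbits close_limits by metis
  moreover have "\<gamma> \<le> dist (fst (l 0)) (snd (l 0))"
    using far by (intro tendsto_lowerbound[OF tendsto_dist[OF limu limv]]) (auto simp: T_def D_def)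
  ultimately show False
    using \<open>\<gamma> > 0\<close> by (metis dist_self not_le)
qed

lemma c_expansive_asymptotic_tracing:
  fixes f :: "'a::metric_space \<Rightarrow> 'a"
  assumes cpt: "compact (UNIV :: 'a set)" and cont: "continuous_on UNIV f" and "c_expansive f"
    and trace: "\<And>\<epsilon>. \<epsilon> > 0 \<Longrightarrow> \<exists>y. \<forall>\<^sub>F i in sequentially. dist (xs i) ((f ^^ i) y) \<le> \<epsilon>"
  shows "\<exists>y. (\<lambda>i. dist (xs i) ((f ^^ i) y)) \<longlonglongrightarrow> 0"
proof -
  obtain e where "e > 0"
    and exp: "\<forall>x\<in>orbit_space f. \<forall>y\<in>orbit_space f. (\<forall>i. dist (x i) (y i) \<le> e) \<longrightarrow> x = y"
    using \<open>c_expansive f\<close> unfolding c_expansive_def by blast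
  obtain y where y: "\<forall>\<^sub>F i in sequentially. dist (xs i) ((f ^^ i) y) \<le> e/2"
    using trace \<open>e > 0\<close> by (meson half_gt_zero)
  \<comment> \<open>Every finer tracing point \<open>y'\<close> has its orbit eventually \<open>e\<close>-close to that of \<open>y\<close>,
      hence asymptotic to it by expansivity.\<close>
  have "\<forall>\<^sub>F i in sequentially. dist (xs i) ((f ^^ i) y) < \<eta>" if "\<eta> > 0" for \<eta>
  proof -
    obtain y' where y': "\<forall>\<^sub>F i in sequentially. dist (xs i) ((f ^^ i) y') \<le> min (\<eta>/2) (e/2)"
      using trace[of "min (\<eta>/2) (e/2)"] \<open>\<eta> > 0\<close> \<open>e > 0\<close> by auto
    have "\<forall>\<^sub>F i in sequentially. dist ((f ^^ i) y) ((f ^^ i) y') \<le> e"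
      using y y'
    proof eventually_elim
      case (elim i)
      then show ?case
        using dist_triangle3[of "(f ^^ i) y" "(f ^^ i) y'" "xs i"] by linarith
    qed
    then have "(\<lambda>i. dist ((f ^^ i) y) ((f ^^ i) y')) \<longlonglongrightarrow> 0"
      by (rule c_expansive_forward_asymptotic[OF cpt cont exp])
    then have "\<forall>\<^sub>F i in sequentially. dist ((f ^^ i) y) ((f ^^ i) y') < \<eta>/2"
      using \<open>\<eta> > 0\<close> unfolding tendsto_iff by (simp del: less_divide_eq_numeral1)
    with y' show ?thesis
    proof eventually_elim
      case (elim i)
      then show ?case
        using dist_triangle[of "xs i" "(f ^^ i) y" "(f ^^ i) y'"] by (simp add: dist_commute)
    qed
  qed
  then have "(\<lambda>i. dist (xs i) ((f ^^ i) y)) \<longlonglongrightarrow> 0"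
    unfolding tendsto_iff by simp
  then show ?thesis ..
qed

lemma equicontinuous_map_funpow:
  fixes f :: "'a::metric_space \<Rightarrow> 'a"
  assumes "bounded (UNIV :: 'a set)" and "equicontinuous_map f" and "\<epsilon> > 0"
  obtains \<delta> where "\<delta> > 0" and "\<And>x z n. dist x z \<le> \<delta> \<Longrightarrow> dist ((f ^^ n) x) ((f ^^ n) z) \<le> \<epsilon>"
proof -
  obtain \<delta> where "\<delta> > 0"
    and sup: "\<And>x z. dist x z \<le> \<delta> \<Longrightarrow> (SUP n. dist ((f ^^ n) x) ((f ^^ n) z)) \<le> \<epsilon>"
    using assms(2,3) unfolding equicontinuous_map_def by blast
  obtain B where B: "\<And>x z :: 'a. dist x z \<le> B"
    using assms(1) unfolding bounded_two_points by blast
  \<comment> \<open>Boundedness makes the supremum in the definition an honest least upper bound.\<close>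
  have "dist ((f ^^ n) x) ((f ^^ n) z) \<le> (SUP n. dist ((f ^^ n) x) ((f ^^ n) z))" for x z n
    by (rule cSUP_upper) (auto intro: bdd_aboveI2[where M = B] B)
  with sup have "\<And>x z n. dist x z \<le> \<delta> \<Longrightarrow> dist ((f ^^ n) x) ((f ^^ n) z) \<le> \<epsilon>"
    by (meson order.trans)
  with \<open>\<delta> > 0\<close> show ?thesis
    using that by blast
qed

lemma equicontinuous_asymptotic_tracing:
  fixes f :: "'a::metric_space \<Rightarrow> 'a"
  assumes cpt: "compact (UNIV :: 'a set)" and "equicontinuous_map f"
    and trace: "\<And>\<epsilon>. \<epsilon> > 0 \<Longrightarrow> \<exists>y. \<forall>\<^sub>F i in sequentially. dist (xs i) ((f ^^ i) y) \<le> \<epsilon>"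
  shows "\<exists>y. (\<lambda>i. dist (xs i) ((f ^^ i) y)) \<longlonglongrightarrow> 0"
proof -
  have "\<forall>k. \<exists>y. \<forall>\<^sub>F i in sequentially. dist (xs i) ((f ^^ i) y) \<le> 1 / Suc k"
    using trace by simp
  then obtain Y where Y: "\<And>k. \<forall>\<^sub>F i in sequentially. dist (xs i) ((f ^^ i) (Y k)) \<le> 1 / Suc k"
    by metis
  obtain y s where s: "strict_mono s" and lim: "(Y \<circ> s) \<longlonglongrightarrow> y"
    by (rule seq_compactE[OF compact_imp_seq_compact[OF cpt], of Y]) auto
  have "\<forall>\<^sub>F i in sequentially. dist (xs i) ((f ^^ i) y) < \<eta>" if "\<eta> > 0" for \<eta>
  proof -
    obtain \<delta> where "\<delta> > 0"
      and eq: "\<And>x z n. dist x z \<le> \<delta> \<Longrightarrow> dist ((f ^^ n) x) ((f ^^ n) z) \<le> \<eta>/2"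
      by (rule equicontinuous_map_funpow[OF compact_imp_bounded[OF cpt] \<open>equicontinuous_map f\<close>, of "\<eta>/2"])
        (use \<open>\<eta> > 0\<close> in auto)
    have "(\<lambda>k. 1 / real (Suc (s k))) \<longlonglongrightarrow> 0"
      using LIMSEQ_subseq_LIMSEQ[OF LIMSEQ_Suc[OF lim_1_over_n] s] by (simp add: o_def)
    then have "\<forall>\<^sub>F k in sequentially. 1 / real (Suc (s k)) < \<eta>/2"
      using \<open>\<eta> > 0\<close> by (intro order_tendstoD(2)) auto
    moreover have "\<forall>\<^sub>F k in sequentially. dist (Y (s k)) y < \<delta>"
      using lim \<open>\<delta> > 0\<close> unfolding tendsto_iff o_def by blast
    ultimately have "\<forall>\<^sub>F k in sequentially. dist (Y (s k)) y < \<delta> \<and> 1 / real (Suc (s k)) < \<eta>/2"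
      by (rule eventually_conj[rotated])
    then obtain k where k: "dist (Y (s k)) y < \<delta>" "1 / real (Suc (s k)) < \<eta>/2"
      unfolding eventually_sequentially by blast
    show ?thesis
      using Y[of "s k"]
    proof eventually_elim
      case (elim i)
      moreover have "dist ((f ^^ i) (Y (s k))) ((f ^^ i) y) \<le> \<eta>/2"
        using eq k(1) by simp
      ultimately show ?case
        using k(2) dist_triangle[of "xs i" "(f ^^ i) y" "(f ^^ i) (Y (s k))"] by linarith
    qed
  qed
  then have "(\<lambda>i. dist (xs i) ((f ^^ i) y)) \<longlonglongrightarrow> 0"
    unfolding tendsto_iff by simp
  then show ?thesis ..
qed

theorem proposition1p1:
  fixes f :: "'a::metric_space \<Rightarrow> 'a"
  assumes "compact (UNIV :: 'a set)"
    and "continuous_on UNIV f"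
    and "c_expansive f \<or> equicontinuous_map f"
    and "shadowing f"
  shows "limit_shadowing f"
  unfolding limit_shadowing_def
proof (intro allI impI)
  fix xs :: "nat \<Rightarrow> 'a"
  assume "(\<lambda>i. dist (f (xs i)) (xs (Suc i))) \<longlonglongrightarrow> 0"
  then have "\<And>\<epsilon>. \<epsilon> > 0 \<Longrightarrow> \<exists>y. \<forall>\<^sub>F i in sequentially. dist (xs i) ((f ^^ i) y) \<le> \<epsilon>"
    using shadowing_eventually_traces[OF assms(1,2,4)] by blast
  with assms(1-3) show "\<exists>y. (\<lambda>i. dist (xs i) ((f ^^ i) y)) \<longlonglongrightarrow> 0"
    using c_expansive_asymptotic_tracing equicontinuous_asymptotic_tracing by blast
qed

end
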